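(* Let $S$ be an infinite commutative domain satisfying conditions (1) and (2) below, with a first-order structure expanding its ring structure. Extend the language by two unary predicate symbols $P_1,P_2$, and for $A,B\subseteq S$ let $S_{A,B}$ be the expansion in which $P_1$ is interpreted as $A$ and $P_2$ as $B$. Then there exists a first-order sentence $\Psi$ in this extended language such that: (i) if $A\subseteq B$ then $S_{A,B}\models\Psi$; (ii) if $A$ is finite and $B\subseteq S$ is arbitrary, then $S_{A,B}\models\Psi$ iff $|A|\le|B|$; (iii) if $A$ is infinite and $B$ is finite, then $S_{A,B}\not\models\Psi$. (1) For every finite $A\subseteq S$ there is $x\in S$, neither zero nor a unit, with $(x)+(a_i)=S$ for all $a_i\in A\setminus\{0\}$. (2) For every finite $A\subseteq S$ with $0\notin A$ and every $a\in S$ neither zero nor a unit, there is $g\in S$ such that each $1+a_ig$ ($a_i\in A$) is neither zero nor a unit, $(a)+(1+a_ig)=S$ for all $a_i\in A$, and $(1+a_ig)+(1+a_jg)=S$ for distinct $a_i,a_j\in A$. *)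

theory Defs
  imports Main
begin

datatype 'f trm =
    Var nat
  | Zero
  | One
  | Add "'f trm" "'f trm"
  | Mul "'f trm" "'f trm"
  | Neg "'f trm"
  | Fn 'f "'f trm list"

datatype ('f, 'r) fm =
    FFalse
  | Eq "'f trm" "'f trm"
  | Rel 'r "'f trm list"
  | P1 "'f trm"
  | P2 "'f trm"
  | Not "('f, 'r) fm"
  | And "('f, 'r) fm" "('f, 'r) fm"
  | Or "('f, 'r) fm" "('f, 'r) fm"
  | Ex nat "('f, 'r) fm"
  | All nat "('f, 'r) fm"

fun fv_trm :: "'f trm \<Rightarrow> nat set" where
  "fv_trm (Var n) = {n}"
| "fv_trm Zero = {}"
| "fv_trm One = {}"
| "fv_trm (Add s t) = fv_trm s \<union> fv_trm t"
| "fv_trm (Mul s t) = fv_trm s \<union> fv_trm t"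
| "fv_trm (Neg t) = fv_trm t"
| "fv_trm (Fn f ts) = (\<Union>t\<in>set ts. fv_trm t)"

fun fv :: "('f, 'r) fm \<Rightarrow> nat set" where
  "fv FFalse = {}"
| "fv (Eq s t) = fv_trm s \<union> fv_trm t"
| "fv (Rel r ts) = (\<Union>t\<in>set ts. fv_trm t)"
| "fv (P1 t) = fv_trm t"
| "fv (P2 t) = fv_trm t"
| "fv (Not \<phi>) = fv \<phi>"
| "fv (And \<phi> \<psi>) = fv \<phi> \<union> fv \<psi>"
| "fv (Or \<phi> \<psi>) = fv \<phi> \<union> fv \<psi>"
| "fv (Ex n \<phi>) = fv \<phi> - {n}"
| "fv (All n \<phi>) = fv \<phi> - {n}"

definition sentence :: "('f, 'r) fm \<Rightarrow> bool" where
  "sentence \<phi> \<longleftrightarrow> fv \<phi> = {}"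

fun eval_trm :: "('f \<Rightarrow> 'a list \<Rightarrow> 'a) \<Rightarrow> (nat \<Rightarrow> 'a) \<Rightarrow> 'f trm \<Rightarrow> 'a::comm_ring_1" where
  "eval_trm fI e (Var n) = e n"
| "eval_trm fI e Zero = 0"
| "eval_trm fI e One = 1"
| "eval_trm fI e (Add s t) = eval_trm fI e s + eval_trm fI e t"
| "eval_trm fI e (Mul s t) = eval_trm fI e s * eval_trm fI e t"
| "eval_trm fI e (Neg t) = - eval_trm fI e t"
| "eval_trm fI e (Fn f ts) = fI f (map (eval_trm fI e) ts)"

fun sat :: "('f \<Rightarrow> 'a list \<Rightarrow> 'a) \<Rightarrow> ('r \<Rightarrow> 'a list \<Rightarrow> bool) \<Rightarrow> 'a set \<Rightarrow> 'a set
            \<Rightarrow> (nat \<Rightarrow> 'a::comm_ring_1) \<Rightarrow> ('f, 'r) fm \<Rightarrow> bool" where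
  "sat fI rI A B e FFalse = False"
| "sat fI rI A B e (Eq s t) = (eval_trm fI e s = eval_trm fI e t)"
| "sat fI rI A B e (Rel r ts) = rI r (map (eval_trm fI e) ts)"
| "sat fI rI A B e (P1 t) = (eval_trm fI e t \<in> A)"
| "sat fI rI A B e (P2 t) = (eval_trm fI e t \<in> B)"
| "sat fI rI A B e (Not \<phi>) = (\<not> sat fI rI A B e \<phi>)"
| "sat fI rI A B e (And \<phi> \<psi>) = (sat fI rI A B e \<phi> \<and> sat fI rI A B e \<psi>)"
| "sat fI rI A B e (Or \<phi> \<psi>) = (sat fI rI A B e \<phi> \<or> sat fI rI A B e \<psi>)"
| "sat fI rI A B e (Ex n \<phi>) = (\<exists>x. sat fI rI A B (e(n := x)) \<phi>)"
| "sat fI rI A B e (All n \<phi>) = (\<forall>x. sat fI rI A B (e(n := x)) \<phi>)"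

text \<open>S_{A,B} \<Turnstile> \<phi> for a sentence (assignment irrelevant; we require all assignments).\<close>
definition models :: "('f \<Rightarrow> 'a list \<Rightarrow> 'a::comm_ring_1) \<Rightarrow> ('r \<Rightarrow> 'a list \<Rightarrow> bool) \<Rightarrow> 'a set \<Rightarrow> 'a set
            \<Rightarrow> ('f, 'r) fm \<Rightarrow> bool" where
  "models fI rI A B \<phi> \<longleftrightarrow> (\<forall>e. sat fI rI A B e \<phi>)"

text \<open>Units are the divisors of 1. (x) + (y) = S: the ideals generated by x and y sum to the whole ring.\<close>
definition comaximal :: "'a::comm_ring_1 \<Rightarrow> 'a \<Rightarrow> bool" where
  "comaximal x y \<longleftrightarrow> (\<exists>u v. u * x + v * y = 1)"

definition cond1 :: "'a::idom itself \<Rightarrow> bool" where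
  "cond1 _ \<longleftrightarrow> (\<forall>A :: 'a::idom set. finite A \<longrightarrow>
     (\<exists>x. x \<noteq> 0 \<and> \<not> x dvd 1 \<and> (\<forall>a\<in>A - {0}. comaximal x a)))"

definition cond2 :: "'a::idom itself \<Rightarrow> bool" where
  "cond2 _ \<longleftrightarrow> (\<forall>(A :: 'a::idom set) a. finite A \<longrightarrow> 0 \<notin> A \<longrightarrow> a \<noteq> 0 \<longrightarrow> \<not> a dvd 1 \<longrightarrow>
     (\<exists>g. (\<forall>ai\<in>A. 1 + ai * g \<noteq> 0 \<and> \<not> (1 + ai * g) dvd 1 \<and> comaximal a (1 + ai * g)) \<and>
          (\<forall>ai\<in>A. \<forall>aj\<in>A. ai \<noteq> aj \<longrightarrow> comaximal (1 + ai * g) (1 + aj * g))))"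

definition card_le :: "'a set \<Rightarrow> 'a set \<Rightarrow> bool" where
  "card_le A B \<longleftrightarrow> (\<exists>f. inj_on f A \<and> f ` A \<subseteq> B)"

end

theory Submission
  imports Defs
begin

text \<open>Call the non-unit divisors \<open>q\<close> of a parameter \<open>w\<close> slots, and say that \<open>a\<close> and \<open>b\<close> are
  matched if some slot \<open>q\<close> has \<open>c \<equiv> a\<close> and \<open>d \<equiv> b (mod q)\<close>. The sentence \<open>\<Psi>\<close> says that
  \<open>A \<subseteq> B\<close>, or that for some parameters \<open>c, d, w\<close> every \<open>a \<in> A\<close> is matched to some \<open>b \<in> B\<close>
  to which no other element of \<open>A\<close> is matched; this yields an injection \<open>A \<rightarrow> B\<close>, so \<open>\<Psi>\<close>
  implies \<open>|A| \<le> |B|\<close>. Conversely, given a finite \<open>A\<close> and an injection \<open>f : A \<rightarrow> B\<close>, the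
  conditions (1) and (2) provide pairwise comaximal non-units \<open>q\<^sub>a\<close> (\<open>a \<in> A\<close>), each comaximal
  to all differences \<open>a - a'\<close> and \<open>f a - f a'\<close>. With \<open>w = \<Prod>q\<^sub>a\<close> and \<open>c, d\<close> chosen by the Chinese
  remainder theorem so that \<open>c \<equiv> a\<close> and \<open>d \<equiv> f a (mod q\<^sub>a)\<close>, a slot of \<open>w\<close> on which \<open>c \<equiv> a'\<close>
  must divide \<open>q\<^sub>a\<^sub>'\<close>; hence \<open>a\<close> is matched exactly to \<open>f a\<close>.\<close>

lemma comaximal_commute: "comaximal x y \<longleftrightarrow> comaximal y x"
  unfolding comaximal_def by (metis add.commute)

lemma comaximal_one: "comaximal x (1::'a::comm_ring_1)"
  unfolding comaximal_def by (rule exI[of _ 0], rule exI[of _ 1]) simp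

lemma comaximal_mult:
  fixes x :: "'a::comm_ring_1"
  assumes "comaximal x y" "comaximal x z"
  shows "comaximal x (y * z)"
proof -
  obtain u v where uv: "u * x + v * y = 1" using assms(1) unfolding comaximal_def by blast
  obtain u' v' where uv': "u' * x + v' * z = 1" using assms(2) unfolding comaximal_def by blast
  have "(u * u' * x + u * v' * z + v * y * u') * x + (v * v') * (y * z)
        = (u * x + v * y) * (u' * x + v' * z)"
    by (simp add: algebra_simps)
  also have "\<dots> = 1" using uv uv' by simp
  finally show ?thesis unfolding comaximal_def by blast
qed

lemma comaximal_prod:
  fixes x :: "'a::comm_ring_1"
  assumes "finite S" "\<forall>i\<in>S. comaximal x (f i)"
  shows "comaximal x (prod f S)"
  using assms by (induction S rule: finite_induct) (auto simp: comaximal_one comaximal_mult)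

lemma comaximal_dvd_left:
  fixes q :: "'a::comm_ring_1"
  shows "q dvd y \<Longrightarrow> comaximal y z \<Longrightarrow> comaximal q z"
  unfolding comaximal_def dvd_def by (metis mult.assoc mult.commute)

lemma comaximal_cong:
  fixes q :: "'a::comm_ring_1"
  assumes "q dvd s - t" "comaximal q t"
  shows "comaximal q s"
proof -
  obtain u v where uv: "u * q + v * t = 1" using assms(2) unfolding comaximal_def by blast
  obtain k where "s = t + q * k" using assms(1) unfolding dvd_def by (metis add.commute diff_add_cancel)
  then have "(u - v * k) * q + v * s = u * q + v * t" by (simp add: algebra_simps)
  then show ?thesis using uv unfolding comaximal_def by metis
qed

lemma comaximal_one_plus_mult:
  fixes \<delta> :: "'a::comm_ring_1"
  assumes "\<delta> dvd m"
  shows "comaximal (1 + m * x) \<delta>"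
proof -
  obtain k where "m = \<delta> * k" using assms unfolding dvd_def by blast
  then have "1 * (1 + m * x) + (- (k * x)) * \<delta> = 1" by (simp add: algebra_simps)
  then show ?thesis unfolding comaximal_def by blast
qed

lemma dvd_of_comaximal_dvd_mult:
  fixes q :: "'a::comm_ring_1"
  assumes "comaximal q z" "q dvd m * z"
  shows "q dvd m"
proof -
  obtain u v where uv: "u * q + v * z = 1" using assms(1) unfolding comaximal_def by blast
  have "m = (m * u) * q + v * (m * z)"
    using uv by (metis mult.commute mult.left_commute distrib_left mult.right_neutral)
  then show ?thesis using assms(2) by (metis dvd_add dvd_mult dvd_triv_right)
qed

lemma comaximal_common_divisor_unit:
  fixes p :: "'a::comm_ring_1"
  assumes "comaximal q r" "p dvd q" "p dvd r"
  shows "p dvd 1"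
proof -
  obtain u v where "u * q + v * r = 1" using assms(1) unfolding comaximal_def by blast
  moreover have "p dvd u * q + v * r" using assms(2,3) by simp
  ultimately show ?thesis by simp
qed

lemma chinese_remainder_comaximal:
  fixes q :: "'i \<Rightarrow> 'a::comm_ring_1"
  assumes "finite I" "\<forall>i\<in>I. \<forall>j\<in>I. i \<noteq> j \<longrightarrow> comaximal (q i) (q j)"
  shows "\<exists>c. \<forall>i\<in>I. q i dvd c - r i"
  using assms
proof (induction I rule: finite_induct)
  case empty
  then show ?case by simp
next
  case (insert x I)
  then obtain c0 where c0: "\<forall>i\<in>I. q i dvd c0 - r i" by auto
  have "comaximal (q x) (prod q I)"
    using insert by (intro comaximal_prod) auto
  then obtain u v where uv: "u * q x + v * prod q I = 1" unfolding comaximal_def by blast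
  define c where "c = c0 + (r x - c0) * v * prod q I"
  have "c - r x = (c0 - r x) * (1 - v * prod q I)" unfolding c_def by (simp add: algebra_simps)
  also have "\<dots> = (c0 - r x) * u * q x" using uv by (metis add_diff_cancel_right' mult.assoc)
  finally have "q x dvd c - r x" by simp
  moreover have "q i dvd c - r i" if "i \<in> I" for i
  proof -
    have "q i dvd (r x - c0) * v * prod q I" using that insert(1) by (simp add: dvd_prodI)
    moreover have "c - r i = (c0 - r i) + (r x - c0) * v * prod q I" unfolding c_def by simp
    ultimately show ?thesis using c0 that by (metis dvd_add)
  qed
  ultimately show ?case by auto
qed

text \<open>If \<open>c \<equiv> r j (mod q j)\<close> for all \<open>j\<close>, then \<open>c - r i\<close> is comaximal to every \<open>q j\<close> with \<open>j \<noteq> i\<close>.\<close>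

lemma dvd_factor_of_dvd_residue:
  fixes q :: "'i \<Rightarrow> 'a::comm_ring_1"
  assumes "finite I" "i \<in> I" "p dvd prod q I" "p dvd c - r i"
    and "\<forall>j\<in>I - {i}. q j dvd c - r j \<and> comaximal (q j) (r j - r i)"
  shows "p dvd q i"
proof -
  have "comaximal (q j) (c - r i)" if "j \<in> I - {i}" for j
  proof (rule comaximal_cong)
    show "q j dvd (c - r i) - (r j - r i)" using assms(5) that by simp
  qed (use assms(5) that in blast)
  then have "comaximal (c - r i) (prod q (I - {i}))"
    using assms(1) by (intro comaximal_prod) (auto simp: comaximal_commute)
  then have "comaximal p (prod q (I - {i}))" using assms(4) comaximal_dvd_left by blast
  moreover have "prod q I = q i * prod q (I - {i})" using assms(1,2) by (simp add: prod.remove)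
  ultimately show ?thesis using assms(3) dvd_of_comaximal_dvd_mult by metis
qed

definition shares_slot :: "'a::comm_ring_1 \<Rightarrow> 'a \<Rightarrow> 'a \<Rightarrow> 'a \<Rightarrow> 'a \<Rightarrow> bool" where
  "shares_slot w c d a b \<longleftrightarrow> (\<exists>q. \<not> q dvd 1 \<and> q dvd w \<and> q dvd c - a \<and> q dvd d - b)"

definition codes_injection :: "'a::comm_ring_1 \<Rightarrow> 'a \<Rightarrow> 'a \<Rightarrow> 'a set \<Rightarrow> 'a set \<Rightarrow> bool" where
  "codes_injection w c d A B \<longleftrightarrow>
     (\<forall>a\<in>A. \<exists>b\<in>B. shares_slot w c d a b \<and> (\<forall>a'\<in>A. shares_slot w c d a' b \<longrightarrow> a' = a))"

lemma card_le_of_subset: "A \<subseteq> B \<Longrightarrow> card_le A B"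
  unfolding card_le_def by (intro exI[of _ id]) simp

lemma finite_if_card_le_finite: "card_le A B \<Longrightarrow> finite B \<Longrightarrow> finite A"
  unfolding card_le_def by (metis finite_imageD finite_subset)

lemma card_le_of_codes_injection:
  assumes "codes_injection w c d A B"
  shows "card_le A B"
proof -
  obtain f where f: "\<forall>a\<in>A. f a \<in> B \<and> shares_slot w c d a (f a) \<and>
                            (\<forall>a'\<in>A. shares_slot w c d a' (f a) \<longrightarrow> a' = a)"
    using assms unfolding codes_injection_def by metis
  then have "inj_on f A" by (intro inj_onI) metis
  moreover have "f ` A \<subseteq> B" using f by blast
  ultimately show ?thesis unfolding card_le_def by blast
qed

text \<open>The witnesses are \<open>q\<^sub>i = 1 + P h\<^sub>i g\<close> with \<open>P = \<Prod>D\<close>, distinct nonzero \<open>h\<^sub>i\<close>, and \<open>g\<close> given by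
  condition (2) for the elements \<open>P h\<^sub>i\<close>; condition (1) only supplies the non-unit that (2) needs.\<close>

lemma exists_comaximal_nonunits:
  fixes D :: "'a::idom set" and I :: "'i set"
  assumes "infinite (UNIV :: 'a set)" "cond1 TYPE('a)" "cond2 TYPE('a)"
    and "finite I" "finite D" "0 \<notin> D"
  shows "\<exists>q. (\<forall>i\<in>I. \<not> q i dvd 1 \<and> (\<forall>\<delta>\<in>D. comaximal (q i) \<delta>)) \<and>
             (\<forall>i\<in>I. \<forall>j\<in>I. i \<noteq> j \<longrightarrow> comaximal (q i) (q j))"
proof -
  define P where "P = \<Prod>D"
  have "P \<noteq> 0" unfolding P_def using assms(5,6) by simp
  obtain E :: "'a set" where E: "E \<subseteq> - {0}" "finite E" "card E = card I"
    using infinite_arbitrarily_large[of "- {0::'a}"] assms(1) by auto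
  then obtain h where h: "h ` I \<subseteq> E" "inj_on h I"
    using card_le_inj[OF assms(4) E(2)] by auto
  obtain x :: 'a where x: "x \<noteq> 0" "\<not> x dvd 1"
    using assms(2) unfolding cond1_def by blast
  let ?G = "(\<lambda>i. P * h i) ` I"
  have "finite ?G" "0 \<notin> ?G" using assms(4) \<open>P \<noteq> 0\<close> h E(1) by auto
  then obtain g where g: "\<forall>ai\<in>?G. \<not> (1 + ai * g) dvd 1"
     "\<forall>ai\<in>?G. \<forall>aj\<in>?G. ai \<noteq> aj \<longrightarrow> comaximal (1 + ai * g) (1 + aj * g)"
    using assms(3) x unfolding cond2_def by meson
  define q where "q i = 1 + P * h i * g" for i
  have "comaximal (q i) \<delta>" if "\<delta> \<in> D" for i \<delta>
    unfolding q_def P_def mult.assoc using assms(5) that by (intro comaximal_one_plus_mult dvd_prodI)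
  moreover have "comaximal (q i) (q j)" if "i \<in> I" "j \<in> I" "i \<noteq> j" for i j
  proof -
    have "P * h i \<noteq> P * h j" using h(2) that \<open>P \<noteq> 0\<close> by (auto simp: inj_on_def)
    then show ?thesis using g(2) that unfolding q_def by auto
  qed
  moreover have "\<not> q i dvd 1" if "i \<in> I" for i using g(1) that unfolding q_def by auto
  ultimately show ?thesis by blast
qed

lemma codes_injection_of_card_le:
  fixes A B :: "'a::idom set"
  assumes "infinite (UNIV :: 'a set)" "cond1 TYPE('a)" "cond2 TYPE('a)"
    and "finite A" "card_le A B"
  shows "\<exists>c d w. codes_injection w c d A B"
proof -
  obtain f where f: "inj_on f A" "f ` A \<subseteq> B" using assms(5) unfolding card_le_def by blast
  define D where "D = (\<Union>a\<in>A. \<Union>a'\<in>A - {a}. {a - a', f a - f a'})"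
  have D: "a - a' \<in> D" "f a - f a' \<in> D" if "a \<in> A" "a' \<in> A" "a \<noteq> a'" for a a'
    unfolding D_def using that by blast+
  have D_finite: "finite D" unfolding D_def using assms(4) by blast
  have D_nonzero: "0 \<notin> D"
  proof
    assume "0 \<in> D"
    then obtain a a' where "a \<in> A" "a' \<in> A" "a \<noteq> a'" "f a = f a'"
      unfolding D_def by (auto simp: eq_commute[of 0])
    then show False using f(1) by (blast dest: inj_onD)
  qed
  obtain q where q: "\<forall>i\<in>A. \<not> q i dvd 1 \<and> (\<forall>\<delta>\<in>D. comaximal (q i) \<delta>)"
      and q_comax: "\<forall>i\<in>A. \<forall>j\<in>A. i \<noteq> j \<longrightarrow> comaximal (q i) (q j)"
    using exists_comaximal_nonunits[OF assms(1-4) D_finite D_nonzero] by blast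
  obtain c where c: "\<forall>i\<in>A. q i dvd c - i"
    using chinese_remainder_comaximal[OF assms(4) q_comax, of id] by auto
  obtain d where d: "\<forall>i\<in>A. q i dvd d - f i"
    using chinese_remainder_comaximal[OF assms(4) q_comax, of f] by auto
  define w where "w = prod q A"
  have slot_in_c: "p dvd q a'" if "a' \<in> A" "p dvd w" "p dvd c - a'" for a' p
  proof (rule dvd_factor_of_dvd_residue[where r = id, OF assms(4) that(1)])
    show "\<forall>j\<in>A - {a'}. q j dvd c - id j \<and> comaximal (q j) (id j - id a')"
      using c q D(1) that(1) by simp
  qed (use that in \<open>simp_all add: w_def\<close>)
  have slot_in_d: "p dvd q a" if "a \<in> A" "p dvd w" "p dvd d - f a" for a p
  proof (rule dvd_factor_of_dvd_residue[where r = f, OF assms(4) that(1)])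
    show "\<forall>j\<in>A - {a}. q j dvd d - f j \<and> comaximal (q j) (f j - f a)"
      using d q D(2) that(1) by simp
  qed (use that in \<open>simp_all add: w_def\<close>)
  have "codes_injection w c d A B"
    unfolding codes_injection_def
  proof
    fix a assume a: "a \<in> A"
    have "shares_slot w c d a (f a)"
      unfolding shares_slot_def w_def using a q c d assms(4) by blast
    moreover have "a' = a" if a': "a' \<in> A" and "shares_slot w c d a' (f a)" for a'
    proof (rule ccontr)
      assume "a' \<noteq> a"
      obtain p where "\<not> p dvd 1" "p dvd w" "p dvd c - a'" "p dvd d - f a"
        using \<open>shares_slot w c d a' (f a)\<close> unfolding shares_slot_def by blast
      then show False
        using comaximal_common_divisor_unit[OF q_comax[rule_format, OF a' a \<open>a' \<noteq> a\<close>]]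
          slot_in_c[OF a'] slot_in_d[OF a] by blast
    qed
    ultimately show "\<exists>b\<in>B. shares_slot w c d a b \<and> (\<forall>a'\<in>A. shares_slot w c d a' b \<longrightarrow> a' = a)"
      using a f(2) by blast
  qed
  then show ?thesis by blast
qed

text \<open>Variables: \<open>0, 1, 2\<close> hold the parameters \<open>c, d, w\<close>; \<open>3, 5, 6\<close> range over \<open>A\<close>, \<open>B\<close>, \<open>A\<close>;
  \<open>4\<close> is the slot and \<open>8\<close> the witness of divisibility, so these two must not occur free in the
  arguments of \<open>dvd_fm\<close> and \<open>shares_slot_fm\<close>.\<close>

definition dvd_fm :: "'f trm \<Rightarrow> 'f trm \<Rightarrow> ('f, 'r) fm" where
  "dvd_fm x y = Ex 8 (Eq y (Mul x (Var 8)))"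

definition imp_fm :: "('f, 'r) fm \<Rightarrow> ('f, 'r) fm \<Rightarrow> ('f, 'r) fm" where
  "imp_fm \<phi> \<psi> = Or (Not \<phi>) \<psi>"

definition diff_trm :: "nat \<Rightarrow> nat \<Rightarrow> 'f trm" where
  "diff_trm i j = Add (Var i) (Neg (Var j))"

definition shares_slot_fm :: "nat \<Rightarrow> nat \<Rightarrow> ('f, 'r) fm" where
  "shares_slot_fm i j = Ex 4 (And (Not (dvd_fm (Var 4) One)) (And (dvd_fm (Var 4) (Var 2))
     (And (dvd_fm (Var 4) (diff_trm 0 i)) (dvd_fm (Var 4) (diff_trm 1 j)))))"

definition codes_injection_fm :: "('f, 'r) fm" where
  "codes_injection_fm = All 3 (imp_fm (P1 (Var 3))
     (Ex 5 (And (P2 (Var 5)) (And (shares_slot_fm 3 5)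
       (All 6 (imp_fm (And (P1 (Var 6)) (shares_slot_fm 6 5)) (Eq (Var 6) (Var 3))))))))"

definition injection_sentence :: "('f, 'r) fm" where
  "injection_sentence =
     Or (All 3 (imp_fm (P1 (Var 3)) (P2 (Var 3)))) (Ex 0 (Ex 1 (Ex 2 codes_injection_fm)))"

lemma sentence_injection_sentence: "sentence injection_sentence"
  unfolding sentence_def injection_sentence_def codes_injection_fm_def shares_slot_fm_def
    dvd_fm_def imp_fm_def diff_trm_def
  by auto

lemma sat_shares_slot_fm:
  assumes "i \<notin> {4, 8}" "j \<notin> {4, 8}"
  shows "sat fI rI A B e (shares_slot_fm i j) \<longleftrightarrow> shares_slot (e 2) (e 0) (e 1) (e i) (e j)"
  using assms
  unfolding shares_slot_fm_def shares_slot_def dvd_fm_def diff_trm_def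
  by (simp add: dvd_def eq_commute[of 1] del: One_nat_def)

lemma sat_codes_injection_fm:
  "sat fI rI A B e codes_injection_fm \<longleftrightarrow> codes_injection (e 2) (e 0) (e 1) A B"
  unfolding codes_injection_fm_def codes_injection_def imp_fm_def
  by (simp add: sat_shares_slot_fm Ball_def Bex_def disj_commute[of "\<not> _"] flip: imp_conv_disj)

lemma models_injection_sentence:
  "models fI rI A B injection_sentence \<longleftrightarrow> A \<subseteq> B \<or> (\<exists>c d w. codes_injection w c d A B)"
  unfolding models_def injection_sentence_def imp_fm_def
  by (simp add: sat_codes_injection_fm subset_iff)

theorem lemma2p6:
  fixes fI :: "'f \<Rightarrow> 'a list \<Rightarrow> 'a::idom"
    and rI :: "'r \<Rightarrow> 'a list \<Rightarrow> bool"
  assumes "infinite (UNIV :: 'a set)"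
    and "cond1 TYPE('a)"
    and "cond2 TYPE('a)"
  shows "\<exists>\<Psi> :: ('f, 'r) fm. sentence \<Psi> \<and>
     (\<forall>A B. A \<subseteq> B \<longrightarrow> models fI rI A B \<Psi>) \<and>
     (\<forall>A B. finite A \<longrightarrow> (models fI rI A B \<Psi> \<longleftrightarrow> card_le A B)) \<and>
     (\<forall>A B. infinite A \<longrightarrow> finite B \<longrightarrow> \<not> models fI rI A B \<Psi>)"
proof (intro exI[of _ injection_sentence] conjI allI impI)
  have card_le_if_models: "card_le A B" if "models fI rI A B injection_sentence" for A B
    using that card_le_of_subset card_le_of_codes_injection
    unfolding models_injection_sentence by metis
  show "sentence injection_sentence" by (rule sentence_injection_sentence)
  show "models fI rI A B injection_sentence" if "A \<subseteq> B" for A B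
    using that unfolding models_injection_sentence by blast
  show "models fI rI A B injection_sentence \<longleftrightarrow> card_le A B" if "finite A" for A B
  proof
    show "card_le A B" if "models fI rI A B injection_sentence" using that by (rule card_le_if_models)
    show "models fI rI A B injection_sentence" if "card_le A B"
      using codes_injection_of_card_le[OF assms \<open>finite A\<close> that]
      unfolding models_injection_sentence by blast
  qed
  show "\<not> models fI rI A B injection_sentence" if "infinite A" "finite B" for A B
    using that card_le_if_models finite_if_card_le_finite by metis
qed

end
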